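(* Let $\pi_0$ be a policy, $\epsilon\in(0,1)$, $\lambda>0$, and let $\pi^*(a|s)=\left(1+\epsilon\tanh(\tilde A_{\pi_0}(s,a)/(2\lambda))\right)\pi_0(a|s)$ with $\tilde A_{\pi_0}(s,a)=Q_{\pi_0}(s,a)-\mu_{\pi_0}(s)$, where $\mu_{\pi_0}(s)$ satisfies $\mathbb{E}_{a\sim\pi_0(\cdot|s)}[\tanh(\tilde A_{\pi_0}(s,a)/(2\lambda))]=0$ for each $s$. For a policy $\pi_\theta$ define $$D^{TV}_\theta(s)=\mathbb{E}_{a\sim\pi_0(\cdot|s)}\left[\left|\frac{\pi^*(a|s)}{\pi_0(a|s)}-\frac{\pi_\theta(a|s)}{\pi_0(a|s)}\right|\right],\quad D^{ATV}_\theta(s)=\mathbb{E}_{a\sim\pi_0(\cdot|s)}\left[\left|\frac{\pi^*(a|s)}{\pi_0(a|s)}-\frac{\pi_\theta(a|s)}{\pi_0(a|s)}\right||A_{\pi_0}(s,a)|\right],$$ $J^{ATV}(\theta)=\mathbb{E}_{s\sim d_{\pi_0}}[D^{ATV}_\theta(s)]$, $J^{TV}(\theta)=\mathbb{E}_{s\sim d_{\pi_0}}[D^{TV}_\theta(s)]$, $D^{ATV}_{\max}=\max_sD^{ATV}_\theta(s)$, $D^{TV}_{\max}=\max_sD^{TV}_\theta(s)$, $$B=\mathbb{E}_{s\sim d_{\pi^*},a\sim\pi_0(\cdot|s)}\left[\tanh\!\left(\frac{\tilde A_{\pi_0}}{2\lambda}\right)\tilde A_{\pi_0}\right],\qquad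 \tilde\delta=\max_s\mathbb{E}_{a\sim\pi_0(\cdot|s)}\left[\tanh\!\left(\frac{\tilde A_{\pi_0}}{2\lambda}\right)\tilde A_{\pi_0}\right],$$ where $\tilde A_{\pi_0}$ abbreviates $\tilde A_{\pi_0}(s,a)$. Then $$\eta(\pi_\theta)\ge\eta(\pi_0)+\epsilon B-J^{ATV}(\theta)-\frac{\gamma D^{ATV}_{\max}}{1-\gamma}J^{TV}(\theta)-\frac{\gamma\epsilon D^{ATV}_{\max}}{(1-\gamma)^2}-\frac{\gamma\epsilon\tilde\delta D^{TV}_{\max}}{(1-\gamma)^2}.$$
   Context: Infinite-horizon discounted MDP $(\mathcal S,\mathcal A,P,r,d_0,\gamma)$ with transition kernel $P(s'|s,a)$, reward $r(s,a,s')$, initial distribution $d_0$, discount $\gamma\in(0,1)$. Policies $\pi(\cdot|s)$; $\eta(\pi)=\mathbb{E}[\sum_{t\ge0}\gamma^t r(s_t,a_t,s_{t+1})]$ with $s_0\sim d_0$, $a_t\sim\pi(\cdot|s_t)$, $s_{t+1}\sim P(\cdot|s_t,a_t)$; $d_\pi(s)=\sum_{t\ge0}\gamma^t\Pr(s_t=s)$ (unnormalized discounted visitation); $V_\pi,Q_\pi$ the usual value functions, $A_\pi=Q_\pi-V_\pi$. The policy $\pi^*$ above is the optimal policy of $\max_\pi L_{\pi_0}(\pi)-\lambda\mathbb{E}_{s\sim d_{\pi_0},a\sim\pi_0}[H(\pi/\pi_0)]$, $L_{\pi_0}(\pi)=\eta(\pi_0)+\mathbb{E}_{s\sim d_{\pi_0},a\sim\pi_0}[\frac{\pi}{\pi_0}A_{\pi_0}]$,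 $H(\rho)=(\rho-1+\epsilon)\log(\rho-1+\epsilon)+(1+\epsilon-\rho)\log(1+\epsilon-\rho)$. *)

theory Defs
  imports "HOL-Analysis.Analysis"
begin

text \<open>Finite discounted MDP. States 's and actions 'a range over finite types.
  P s a s' = transition probability, r s a s' = reward, d0 = initial distribution,
  policies p s a = p(a|s).\<close>

definition is_policy :: "('s::finite \<Rightarrow> 'a::finite \<Rightarrow> real) \<Rightarrow> bool" where
  "is_policy p \<longleftrightarrow> (\<forall>s a. 0 \<le> p s a) \<and> (\<forall>s. (\<Sum>a\<in>UNIV. p s a) = 1)"

definition is_kernel :: "('s::finite \<Rightarrow> 'a::finite \<Rightarrow> 's \<Rightarrow> real) \<Rightarrow> bool" where
  "is_kernel P \<longleftrightarrow> (\<forall>s a s'. 0 \<le> P s a s') \<and> (\<forall>s a. (\<Sum>s'\<in>UNIV. P s a s') = 1)"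

definition is_distribution :: "('s::finite \<Rightarrow> real) \<Rightarrow> bool" where
  "is_distribution d \<longleftrightarrow> (\<forall>s. 0 \<le> d s) \<and> (\<Sum>s\<in>UNIV. d s) = 1"

primrec state_dist ::
  "('s::finite \<Rightarrow> 'a::finite \<Rightarrow> 's \<Rightarrow> real) \<Rightarrow> ('s \<Rightarrow> real) \<Rightarrow> ('s \<Rightarrow> 'a \<Rightarrow> real) \<Rightarrow> nat \<Rightarrow> 's \<Rightarrow> real"
where
  "state_dist P d0 p 0 = d0"
| "state_dist P d0 p (Suc t) =
     (\<lambda>s'. \<Sum>s\<in>UNIV. \<Sum>a\<in>UNIV. state_dist P d0 p t s * p s a * P s a s')"

text \<open>Unnormalized discounted visitation d_pi(s) = sum_t gamma^t Pr(s_t = s).\<close>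
definition visitation ::
  "('s::finite \<Rightarrow> 'a::finite \<Rightarrow> 's \<Rightarrow> real) \<Rightarrow> ('s \<Rightarrow> real) \<Rightarrow> real \<Rightarrow> ('s \<Rightarrow> 'a \<Rightarrow> real) \<Rightarrow> 's \<Rightarrow> real"
where
  "visitation P d0 \<gamma> p s = (\<Sum>t. \<gamma> ^ t * state_dist P d0 p t s)"

definition exp_reward ::
  "('s::finite \<Rightarrow> 'a::finite \<Rightarrow> 's \<Rightarrow> real) \<Rightarrow> ('s \<Rightarrow> 'a \<Rightarrow> 's \<Rightarrow> real) \<Rightarrow> ('s \<Rightarrow> 'a \<Rightarrow> real) \<Rightarrow> 's \<Rightarrow> real"
where
  "exp_reward P r p s = (\<Sum>a\<in>UNIV. p s a * (\<Sum>s'\<in>UNIV. P s a s' * r s a s'))"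

definition eta ::
  "('s::finite \<Rightarrow> 'a::finite \<Rightarrow> 's \<Rightarrow> real) \<Rightarrow> ('s \<Rightarrow> 'a \<Rightarrow> 's \<Rightarrow> real) \<Rightarrow> ('s \<Rightarrow> real) \<Rightarrow> real
     \<Rightarrow> ('s \<Rightarrow> 'a \<Rightarrow> real) \<Rightarrow> real"
where
  "eta P r d0 \<gamma> p = (\<Sum>t. \<gamma> ^ t * (\<Sum>s\<in>UNIV. state_dist P d0 p t s * exp_reward P r p s))"

definition Vf ::
  "('s::finite \<Rightarrow> 'a::finite \<Rightarrow> 's \<Rightarrow> real) \<Rightarrow> ('s \<Rightarrow> 'a \<Rightarrow> 's \<Rightarrow> real) \<Rightarrow> real
     \<Rightarrow> ('s \<Rightarrow> 'a \<Rightarrow> real) \<Rightarrow> 's \<Rightarrow> real"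
where
  "Vf P r \<gamma> p s = eta P r (\<lambda>s'. if s' = s then 1 else 0) \<gamma> p"

definition Qf ::
  "('s::finite \<Rightarrow> 'a::finite \<Rightarrow> 's \<Rightarrow> real) \<Rightarrow> ('s \<Rightarrow> 'a \<Rightarrow> 's \<Rightarrow> real) \<Rightarrow> real
     \<Rightarrow> ('s \<Rightarrow> 'a \<Rightarrow> real) \<Rightarrow> 's \<Rightarrow> 'a \<Rightarrow> real"
where
  "Qf P r \<gamma> p s a = (\<Sum>s'\<in>UNIV. P s a s' * (r s a s' + \<gamma> * Vf P r \<gamma> p s'))"

definition Af ::
  "('s::finite \<Rightarrow> 'a::finite \<Rightarrow> 's \<Rightarrow> real) \<Rightarrow> ('s \<Rightarrow> 'a \<Rightarrow> 's \<Rightarrow> real) \<Rightarrow> real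
     \<Rightarrow> ('s \<Rightarrow> 'a \<Rightarrow> real) \<Rightarrow> 's \<Rightarrow> 'a \<Rightarrow> real"
where
  "Af P r \<gamma> p s a = Qf P r \<gamma> p s a - Vf P r \<gamma> p s"

definition Atilde ::
  "('s::finite \<Rightarrow> 'a::finite \<Rightarrow> 's \<Rightarrow> real) \<Rightarrow> ('s \<Rightarrow> 'a \<Rightarrow> 's \<Rightarrow> real) \<Rightarrow> real
     \<Rightarrow> ('s \<Rightarrow> 'a \<Rightarrow> real) \<Rightarrow> ('s \<Rightarrow> real) \<Rightarrow> 's \<Rightarrow> 'a \<Rightarrow> real"
where
  "Atilde P r \<gamma> p0 \<mu> s a = Qf P r \<gamma> p0 s a - \<mu> s"

definition pi_star ::
  "('s::finite \<Rightarrow> 'a::finite \<Rightarrow> 's \<Rightarrow> real) \<Rightarrow> ('s \<Rightarrow> 'a \<Rightarrow> 's \<Rightarrow> real) \<Rightarrow> real \<Rightarrow> real \<Rightarrow> real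
     \<Rightarrow> ('s \<Rightarrow> 'a \<Rightarrow> real) \<Rightarrow> ('s \<Rightarrow> real) \<Rightarrow> 's \<Rightarrow> 'a \<Rightarrow> real"
where
  "pi_star P r \<gamma> \<epsilon> lam p0 \<mu> s a =
     (1 + \<epsilon> * tanh (Atilde P r \<gamma> p0 \<mu> s a / (2 * lam))) * p0 s a"

end

theory Submission
  imports Defs
begin

text \<open>By the performance difference lemma \<open>\<eta>(\<pi>\<^sub>\<theta>) - \<eta>(\<pi>\<^sub>0) = \<Sum>\<^sub>s d\<^sub>\<pi>\<^sub>\<theta>(s) E\<^sub>\<pi>\<^sub>\<theta>[A]\<close>,
  and pointwise \<open>E\<^sub>\<pi>\<^sub>\<theta>[A] \<ge> E\<^sub>\<pi>\<^sub>*[A] - D\<^sup>A\<^sup>T\<^sup>V(s)\<close>. Since the tanh weights are centred under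
  \<open>\<pi>\<^sub>0\<close> and \<open>E\<^sub>\<pi>\<^sub>0[A] = 0\<close>, the gain is \<open>E\<^sub>\<pi>\<^sub>*[A] = \<epsilon> E\<^sub>\<pi>\<^sub>0[tanh(\<tilde>A/2\<lambda>) \<tilde>A] \<ge> 0\<close>.
  It remains to replace \<open>d\<^sub>\<pi>\<^sub>\<theta>\<close> by \<open>d\<^sub>\<pi>\<^sub>*\<close> in the gain and by \<open>d\<^sub>\<pi>\<^sub>0\<close> in the penalty.
  Comparing the recursions \<open>d\<^sub>p = d\<^sub>0 + \<gamma> d\<^sub>p M\<^sub>p\<close> for the state transition matrices gives
  \<open>(1 - \<gamma>) \<parallel>d\<^sub>p - d\<^sub>q\<parallel>\<^sub>1 \<le> \<gamma> \<Sum>\<^sub>s d\<^sub>q(s) \<parallel>p(s) - q(s)\<parallel>\<^sub>1\<close>, and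
  \<open>\<parallel>\<pi>\<^sub>\<theta>(s) - \<pi>\<^sub>0(s)\<parallel>\<^sub>1 \<le> D\<^sup>T\<^sup>V(s) + \<epsilon>\<close> because \<open>\<parallel>\<pi>\<^sub>*(s) - \<pi>\<^sub>0(s)\<parallel>\<^sub>1 \<le> \<epsilon>\<close>.\<close>

lemma sum_abs_vector_matrix_le:
  fixes x :: "'i \<Rightarrow> real" and K :: "'i \<Rightarrow> 'j \<Rightarrow> real"
  shows "(\<Sum>j\<in>J. \<bar>\<Sum>i\<in>I. x i * K i j\<bar>) \<le> (\<Sum>i\<in>I. \<bar>x i\<bar> * (\<Sum>j\<in>J. \<bar>K i j\<bar>))"
proof -
  have "(\<Sum>j\<in>J. \<bar>\<Sum>i\<in>I. x i * K i j\<bar>) \<le> (\<Sum>j\<in>J. \<Sum>i\<in>I. \<bar>x i\<bar> * \<bar>K i j\<bar>)"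
    by (rule sum_mono, rule order_trans[OF sum_abs]) (simp add: abs_mult)
  also have "\<dots> = (\<Sum>i\<in>I. \<bar>x i\<bar> * (\<Sum>j\<in>J. \<bar>K i j\<bar>))"
    by (subst sum.swap) (simp add: sum_distrib_left)
  finally show ?thesis .
qed

lemma abs_sum_mult_diff_le:
  fixes x y f :: "'i \<Rightarrow> real"
  assumes "\<And>i. 0 \<le> f i" "\<And>i. f i \<le> M"
  shows "\<bar>(\<Sum>i\<in>I. x i * f i) - (\<Sum>i\<in>I. y i * f i)\<bar> \<le> M * (\<Sum>i\<in>I. \<bar>x i - y i\<bar>)"
proof -
  have "\<bar>(\<Sum>i\<in>I. x i * f i) - (\<Sum>i\<in>I. y i * f i)\<bar> = \<bar>\<Sum>i\<in>I. (x i - y i) * f i\<bar>"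
    by (simp add: left_diff_distrib sum_subtractf)
  also have "\<dots> \<le> (\<Sum>i\<in>I. \<bar>x i - y i\<bar> * M)"
    using assms by (intro order_trans[OF sum_abs] sum_mono) (simp add: abs_mult mult_left_mono)
  also have "\<dots> = M * (\<Sum>i\<in>I. \<bar>x i - y i\<bar>)"
    by (subst sum_distrib_right[symmetric]) (rule mult.commute)
  finally show ?thesis .
qed

lemma summable_discounted:
  fixes \<gamma> :: real
  assumes "0 \<le> \<gamma>" "\<gamma> < 1" "\<And>t. \<bar>f t\<bar> \<le> C"
  shows "summable (\<lambda>t. \<gamma>^t * f t)"
proof (rule summable_comparison_test'[where g="\<lambda>t. C * \<gamma>^t" and N=0])
  show "summable (\<lambda>t. C * \<gamma> ^ t)"
    using assms by (intro summable_mult summable_geometric) simp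
  show "norm (\<gamma>^t * f t) \<le> C * \<gamma>^t" for t
    using assms by (simp add: abs_mult mult.commute mult_right_mono)
qed

lemma tanh_divide_mult_self_nonneg:
  fixes x c :: real
  assumes "0 < c"
  shows "0 \<le> tanh (x / c) * x"
  using assms by (auto simp: zero_le_mult_iff zero_le_divide_iff divide_le_0_iff)

lemma abs_tanh_le_1: "\<bar>tanh (x::real)\<bar> \<le> 1"
  using tanh_real_bounds[of x] by (simp add: abs_le_iff)

lemma mult_abs_diff_divide_self:
  fixes w x y :: real
  assumes "0 < w"
  shows "w * \<bar>x / w - y / w\<bar> = \<bar>x - y\<bar>"
  using assms by (simp add: diff_divide_distrib[symmetric] abs_divide)

section \<open>State distributions\<close>

definition state_kernel ::
  "('s::finite \<Rightarrow> 'a::finite \<Rightarrow> 's \<Rightarrow> real) \<Rightarrow> ('s \<Rightarrow> 'a \<Rightarrow> real) \<Rightarrow> 's \<Rightarrow> 's \<Rightarrow> real"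
  where "state_kernel P p s s' = (\<Sum>a\<in>UNIV. p s a * P s a s')"

abbreviation point_mass :: "'s \<Rightarrow> 's \<Rightarrow> real"
  where "point_mass u \<equiv> (\<lambda>x. if x = u then 1 else 0)"

lemma sum_point_mass_mult:
  fixes s :: "'s::finite"
  shows "(\<Sum>x\<in>UNIV. point_mass s x * g x) = g s"
  by (subst sum.cong[OF refl, of _ _ "\<lambda>x. if x = s then g x else 0"]) auto

lemma state_dist_Suc_kernel:
  "state_dist P d p (Suc t) s' = (\<Sum>s\<in>UNIV. state_dist P d p t s * state_kernel P p s s')"
  by (simp add: state_kernel_def sum_distrib_left mult.assoc)

lemma state_kernel_nonneg: "is_kernel P \<Longrightarrow> is_policy p \<Longrightarrow> 0 \<le> state_kernel P p s s'"
  unfolding state_kernel_def is_kernel_def is_policy_def by (auto intro!: sum_nonneg)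

lemma sum_state_kernel:
  assumes "is_kernel P" "is_policy p"
  shows "(\<Sum>s'\<in>UNIV. state_kernel P p s s') = 1"
proof -
  have "(\<Sum>s'\<in>UNIV. state_kernel P p s s') = (\<Sum>a\<in>UNIV. p s a * (\<Sum>s'\<in>UNIV. P s a s'))"
    unfolding state_kernel_def by (subst sum.swap) (simp add: sum_distrib_left)
  then show ?thesis
    using assms unfolding is_kernel_def is_policy_def by simp
qed

lemma sum_abs_state_kernel_diff_le:
  assumes "is_kernel P"
  shows "(\<Sum>s'\<in>UNIV. \<bar>state_kernel P p s s' - state_kernel P q s s'\<bar>) \<le> (\<Sum>a\<in>UNIV. \<bar>p s a - q s a\<bar>)"
proof -
  have "(\<Sum>s'\<in>UNIV. \<bar>state_kernel P p s s' - state_kernel P q s s'\<bar>)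
      = (\<Sum>s'\<in>UNIV. \<bar>\<Sum>a\<in>UNIV. (p s a - q s a) * P s a s'\<bar>)"
    by (simp add: state_kernel_def left_diff_distrib sum_subtractf)
  also have "\<dots> \<le> (\<Sum>a\<in>UNIV. \<bar>p s a - q s a\<bar> * (\<Sum>s'\<in>UNIV. \<bar>P s a s'\<bar>))"
    by (rule sum_abs_vector_matrix_le)
  also have "\<dots> = (\<Sum>a\<in>UNIV. \<bar>p s a - q s a\<bar>)"
    using assms unfolding is_kernel_def by simp
  finally show ?thesis .
qed

lemma state_dist_nonneg:
  assumes "is_kernel P" "is_policy p" "\<And>s. 0 \<le> d s"
  shows "0 \<le> state_dist P d p t s"
proof (induction t arbitrary: s)
  case 0
  show ?case using assms by simp
next
  case (Suc t)
  show ?case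
    unfolding state_dist_Suc_kernel using Suc assms
    by (auto intro!: sum_nonneg mult_nonneg_nonneg state_kernel_nonneg)
qed

lemma sum_state_dist:
  assumes "is_kernel P" "is_policy p"
  shows "(\<Sum>s\<in>UNIV. state_dist P d p t s) = (\<Sum>s\<in>UNIV. d s)"
proof (induction t)
  case (Suc t)
  have "(\<Sum>s'\<in>UNIV. state_dist P d p (Suc t) s')
      = (\<Sum>s\<in>UNIV. state_dist P d p t s * (\<Sum>s'\<in>UNIV. state_kernel P p s s'))"
    unfolding state_dist_Suc_kernel by (subst sum.swap) (simp add: sum_distrib_left)
  with Suc show ?case
    using sum_state_kernel[OF assms] by simp
qed simp

lemma state_dist_shift: "state_dist P d p (Suc t) = state_dist P (state_dist P d p 1) p t"
proof (induction t)
  case (Suc t)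
  show ?case
    by (simp only: state_dist.simps(2)[of P d p "Suc t"]
        state_dist.simps(2)[of P "state_dist P d p 1" p t] Suc.IH)
qed simp

lemma state_dist_linear:
  "state_dist P d p t s' = (\<Sum>u\<in>UNIV. d u * state_dist P (point_mass u) p t s')"
proof (induction t arbitrary: s')
  case 0
  show ?case by (simp add: if_distrib cong: if_cong)
next
  case (Suc t)
  have "state_dist P d p (Suc t) s'
      = (\<Sum>s\<in>UNIV. \<Sum>u\<in>UNIV. d u * state_dist P (point_mass u) p t s * state_kernel P p s s')"
    unfolding state_dist_Suc_kernel Suc.IH by (simp add: sum_distrib_right)
  also have "\<dots> = (\<Sum>u\<in>UNIV. d u * state_dist P (point_mass u) p (Suc t) s')"
    unfolding state_dist_Suc_kernel by (subst sum.swap) (simp add: sum_distrib_left mult.assoc)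
  finally show ?case .
qed

lemma state_dist_point_mass_one: "state_dist P (point_mass s) p 1 u = state_kernel P p s u"
  by (simp add: state_kernel_def mult.assoc sum_distrib_left[symmetric] sum_point_mass_mult)

lemma summable_discounted_state_dist:
  fixes \<gamma> :: real
  assumes "is_kernel P" "is_policy p" "\<And>s. 0 \<le> d s" "0 \<le> \<gamma>" "\<gamma> < 1"
  shows "summable (\<lambda>t. \<gamma>^t * (state_dist P d p t s * c))"
proof (rule summable_discounted[OF assms(4,5)])
  fix t
  have "state_dist P d p t s \<le> (\<Sum>s\<in>UNIV. state_dist P d p t s)"
    by (rule member_le_sum) (auto intro: state_dist_nonneg[OF assms(1-3)])
  then show "\<bar>state_dist P d p t s * c\<bar> \<le> (\<Sum>s\<in>UNIV. d s) * \<bar>c\<bar>"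
    using state_dist_nonneg[OF assms(1-3)] sum_state_dist[OF assms(1,2)]
    by (simp add: abs_mult mult_right_mono)
qed

section \<open>Discounted visitation and the performance difference\<close>

lemma sum_policy_Qf:
  "(\<Sum>a\<in>UNIV. q s a * Qf P r \<gamma> p s a)
     = exp_reward P r q s + \<gamma> * (\<Sum>u\<in>UNIV. state_kernel P q s u * Vf P r \<gamma> p u)"
proof -
  have "(\<Sum>a\<in>UNIV. q s a * Qf P r \<gamma> p s a)
      = exp_reward P r q s + \<gamma> * (\<Sum>a\<in>UNIV. \<Sum>u\<in>UNIV. q s a * P s a u * Vf P r \<gamma> p u)"
    unfolding Qf_def exp_reward_def by (simp add: algebra_simps sum.distrib sum_distrib_left)
  also have "(\<Sum>a\<in>UNIV. \<Sum>u\<in>UNIV. q s a * P s a u * Vf P r \<gamma> p u)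
      = (\<Sum>u\<in>UNIV. state_kernel P q s u * Vf P r \<gamma> p u)"
    unfolding state_kernel_def by (subst sum.swap) (simp add: sum_distrib_right)
  finally show ?thesis .
qed

lemma sum_policy_Af:
  assumes "is_policy q"
  shows "(\<Sum>a\<in>UNIV. q s a * Af P r \<gamma> p s a)
     = exp_reward P r q s + \<gamma> * (\<Sum>u\<in>UNIV. state_kernel P q s u * Vf P r \<gamma> p u) - Vf P r \<gamma> p s"
proof -
  have "(\<Sum>a\<in>UNIV. q s a * Af P r \<gamma> p s a)
      = (\<Sum>a\<in>UNIV. q s a * Qf P r \<gamma> p s a) - (\<Sum>a\<in>UNIV. q s a) * Vf P r \<gamma> p s"
    by (simp add: Af_def right_diff_distrib sum_subtractf sum_distrib_right)
  then show ?thesis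
    using assms unfolding is_policy_def by (simp add: sum_policy_Qf)
qed

locale discounted_mdp =
  fixes P :: "'s::finite \<Rightarrow> 'a::finite \<Rightarrow> 's \<Rightarrow> real" and \<gamma> :: real
  assumes kernel: "is_kernel P" and discount_nonneg: "0 \<le> \<gamma>" and discount_lt_1: "\<gamma> < 1"
begin

lemma summable_eta:
  assumes "is_policy p" "\<And>s. 0 \<le> d s"
  shows "summable (\<lambda>t. \<gamma>^t * (\<Sum>s\<in>UNIV. state_dist P d p t s * R s))"
  unfolding sum_distrib_left
  by (intro summable_sum summable_discounted_state_dist[OF kernel assms discount_nonneg discount_lt_1])

lemma summable_visitation:
  assumes "is_policy p" "\<And>s. 0 \<le> d s"
  shows "summable (\<lambda>t. \<gamma>^t * state_dist P d p t s)"
  using summable_discounted_state_dist[OF kernel assms discount_nonneg discount_lt_1, where s=s and c=1]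
  by simp

lemma visitation_nonneg:
  assumes "is_policy p" "\<And>s. 0 \<le> d s"
  shows "0 \<le> visitation P d \<gamma> p s"
  unfolding visitation_def
  by (intro suminf_nonneg summable_visitation[OF assms] mult_nonneg_nonneg zero_le_power
      discount_nonneg state_dist_nonneg[OF kernel assms])

lemma eta_eq_sum_visitation:
  assumes "is_policy p" "\<And>s. 0 \<le> d s"
  shows "eta P r d \<gamma> p = (\<Sum>s\<in>UNIV. visitation P d \<gamma> p s * exp_reward P r p s)"
proof -
  have "eta P r d \<gamma> p = (\<Sum>t. \<Sum>s\<in>UNIV. \<gamma>^t * (state_dist P d p t s * exp_reward P r p s))"
    by (simp add: eta_def sum_distrib_left)
  also have "\<dots> = (\<Sum>s\<in>UNIV. \<Sum>t. \<gamma>^t * (state_dist P d p t s * exp_reward P r p s))"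
    by (rule suminf_sum)
      (rule summable_discounted_state_dist[OF kernel assms discount_nonneg discount_lt_1])
  also have "\<dots> = (\<Sum>s\<in>UNIV. visitation P d \<gamma> p s * exp_reward P r p s)"
    unfolding visitation_def
    by (simp add: suminf_mult2[OF summable_visitation[OF assms]] mult.assoc)
  finally show ?thesis .
qed

lemma visitation_rec:
  assumes "is_policy p" "\<And>s. 0 \<le> d s"
  shows "visitation P d \<gamma> p s' = d s' + \<gamma> * (\<Sum>s\<in>UNIV. visitation P d \<gamma> p s * state_kernel P p s s')"
proof -
  let ?f = "\<lambda>t. \<gamma>^t * state_dist P d p t s'"
  have summable: "summable (\<lambda>t. \<gamma> * (\<gamma>^t * state_dist P d p t s))" for s
    by (intro summable_mult summable_visitation[OF assms])
  have "visitation P d \<gamma> p s' = ?f 0 + (\<Sum>t. ?f (Suc t))"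
    unfolding visitation_def using suminf_split_head[OF summable_visitation[OF assms]] by simp
  also have "(\<Sum>t. ?f (Suc t))
      = (\<Sum>t. \<Sum>s\<in>UNIV. \<gamma> * (\<gamma>^t * state_dist P d p t s) * state_kernel P p s s')"
    by (simp only: state_dist_Suc_kernel power_Suc sum_distrib_left mult.assoc)
  also have "\<dots> = (\<Sum>s\<in>UNIV. \<Sum>t. \<gamma> * (\<gamma>^t * state_dist P d p t s) * state_kernel P p s s')"
    by (rule suminf_sum) (intro summable_mult2 summable)
  also have "\<dots> = (\<Sum>s\<in>UNIV. (\<Sum>t. \<gamma> * (\<gamma>^t * state_dist P d p t s)) * state_kernel P p s s')"
    by (simp only: suminf_mult2[OF summable])
  also have "\<dots> = (\<Sum>s\<in>UNIV. \<gamma> * visitation P d \<gamma> p s * state_kernel P p s s')"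
    unfolding visitation_def by (simp only: suminf_mult[OF summable_visitation[OF assms]])
  finally show ?thesis
    by (simp add: sum_distrib_left mult.assoc)
qed

lemma sum_visitation:
  assumes "is_policy p" "\<And>s. 0 \<le> d s"
  shows "(\<Sum>s\<in>UNIV. visitation P d \<gamma> p s) = (\<Sum>s\<in>UNIV. d s) / (1 - \<gamma>)"
proof -
  let ?v = "visitation P d \<gamma> p"
  have "(\<Sum>s'\<in>UNIV. ?v s') = (\<Sum>s'\<in>UNIV. d s' + \<gamma> * (\<Sum>s\<in>UNIV. ?v s * state_kernel P p s s'))"
    by (rule sum.cong[OF refl]) (rule visitation_rec[OF assms])
  also have "\<dots> = (\<Sum>s'\<in>UNIV. d s') + \<gamma> * (\<Sum>s\<in>UNIV. ?v s * (\<Sum>s'\<in>UNIV. state_kernel P p s s'))"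
    by (simp add: sum.distrib sum_distrib_left) (subst sum.swap, simp)
  finally show ?thesis
    using sum_state_kernel[OF kernel assms(1)] discount_lt_1 by (simp add: field_simps)
qed

lemma eta_shift:
  assumes "is_policy p" "\<And>s. 0 \<le> d s"
  shows "eta P r d \<gamma> p
    = (\<Sum>s\<in>UNIV. d s * exp_reward P r p s) + \<gamma> * eta P r (state_dist P d p 1) \<gamma> p"
proof -
  let ?g = "\<lambda>t. \<gamma>^t * (\<Sum>s\<in>UNIV. state_dist P d p t s * exp_reward P r p s)"
  have "\<And>s. 0 \<le> state_dist P d p 1 s"
    by (rule state_dist_nonneg[OF kernel assms])
  note summable_shifted = summable_eta[OF assms(1) this]
  have "eta P r d \<gamma> p = ?g 0 + (\<Sum>t. ?g (Suc t))"
    unfolding eta_def using suminf_split_head[OF summable_eta[OF assms]] by simp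
  also have "(\<Sum>t. ?g (Suc t))
      = (\<Sum>t. \<gamma> * (\<gamma>^t * (\<Sum>s\<in>UNIV. state_dist P (state_dist P d p 1) p t s * exp_reward P r p s)))"
    by (simp only: state_dist_shift power_Suc mult.assoc)
  also have "\<dots> = \<gamma> * eta P r (state_dist P d p 1) \<gamma> p"
    unfolding eta_def by (rule suminf_mult[OF summable_shifted])
  finally show ?thesis by simp
qed

lemma eta_eq_sum_Vf:
  assumes "is_policy p" "\<And>s. 0 \<le> d s"
  shows "eta P r d \<gamma> p = (\<Sum>u\<in>UNIV. d u * Vf P r \<gamma> p u)"
proof -
  let ?e = "\<lambda>u t. \<gamma>^t * (\<Sum>s\<in>UNIV. state_dist P (point_mass u) p t s * exp_reward P r p s)"
  have summable: "summable (?e u)" for u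
    by (rule summable_eta[OF assms(1)]) simp
  have "\<gamma>^t * (\<Sum>s\<in>UNIV. state_dist P d p t s * exp_reward P r p s) = (\<Sum>u\<in>UNIV. d u * ?e u t)" for t
  proof -
    have "\<gamma>^t * (\<Sum>s\<in>UNIV. state_dist P d p t s * exp_reward P r p s)
        = \<gamma>^t * (\<Sum>s\<in>UNIV. \<Sum>u\<in>UNIV. d u * state_dist P (point_mass u) p t s * exp_reward P r p s)"
      by (subst state_dist_linear) (simp add: sum_distrib_right)
    also have "\<dots> = \<gamma>^t * (\<Sum>u\<in>UNIV. \<Sum>s\<in>UNIV. d u * state_dist P (point_mass u) p t s * exp_reward P r p s)"
      by (subst sum.swap) (rule refl)
    finally show ?thesis
      by (simp add: sum_distrib_left mult_ac)
  qed
  then have "eta P r d \<gamma> p = (\<Sum>t. \<Sum>u\<in>UNIV. d u * ?e u t)"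
    unfolding eta_def by simp
  also have "\<dots> = (\<Sum>u\<in>UNIV. d u * (\<Sum>t. ?e u t))"
    by (simp add: suminf_sum summable_mult summable suminf_mult)
  finally show ?thesis
    unfolding Vf_def eta_def .
qed

lemma Vf_bellman:
  assumes "is_policy p"
  shows "Vf P r \<gamma> p s = exp_reward P r p s + \<gamma> * (\<Sum>u\<in>UNIV. state_kernel P p s u * Vf P r \<gamma> p u)"
proof -
  have "\<And>u. 0 \<le> state_dist P (point_mass s) p 1 u"
    by (rule state_dist_nonneg[OF kernel assms]) simp
  then have "eta P r (state_dist P (point_mass s) p 1) \<gamma> p
      = (\<Sum>u\<in>UNIV. state_kernel P p s u * Vf P r \<gamma> p u)"
    by (simp only: eta_eq_sum_Vf[OF assms] state_dist_point_mass_one)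
  then show ?thesis
    unfolding Vf_def by (subst eta_shift[OF assms]) (simp_all add: sum_point_mass_mult)
qed

lemma sum_policy_Af_self:
  assumes "is_policy p"
  shows "(\<Sum>a\<in>UNIV. p s a * Af P r \<gamma> p s a) = 0"
  using Vf_bellman[OF assms, where r=r and s=s] by (simp add: sum_policy_Af[OF assms])

text \<open>Summed against \<open>d\<^sub>q\<close>, the part \<open>\<gamma> M\<^sub>q V - V\<close> of the advantage telescopes to
  \<open>-\<Sum>\<^sub>s d(s) V(s) = -\<eta>(p)\<close> by the recursion \<open>d\<^sub>q = d + \<gamma> d\<^sub>q M\<^sub>q\<close>.\<close>
lemma performance_difference:
  assumes "is_policy p" "is_policy q" "\<And>s. 0 \<le> d s"
  shows "eta P r d \<gamma> q - eta P r d \<gamma> p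
       = (\<Sum>s\<in>UNIV. visitation P d \<gamma> q s * (\<Sum>a\<in>UNIV. q s a * Af P r \<gamma> p s a))"
proof -
  let ?V = "Vf P r \<gamma> p" and ?v = "visitation P d \<gamma> q" and ?M = "state_kernel P q"
  have "(\<Sum>s\<in>UNIV. ?v s * (\<gamma> * (\<Sum>u\<in>UNIV. ?M s u * ?V u)))
      = (\<Sum>s\<in>UNIV. \<Sum>u\<in>UNIV. \<gamma> * ?v s * ?M s u * ?V u)"
    by (simp add: sum_distrib_left mult_ac)
  also have "\<dots> = (\<Sum>u\<in>UNIV. \<Sum>s\<in>UNIV. \<gamma> * ?v s * ?M s u * ?V u)"
    by (rule sum.swap)
  also have "\<dots> = (\<Sum>u\<in>UNIV. (\<gamma> * (\<Sum>s\<in>UNIV. ?v s * ?M s u)) * ?V u)"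
    by (simp add: sum_distrib_left sum_distrib_right mult_ac)
  also have "\<dots> = (\<Sum>u\<in>UNIV. (?v u - d u) * ?V u)"
  proof (rule sum.cong[OF refl])
    fix u
    have "?v u = d u + \<gamma> * (\<Sum>s\<in>UNIV. ?v s * ?M s u)"
      by (rule visitation_rec[OF assms(2,3)])
    then show "\<gamma> * (\<Sum>s\<in>UNIV. ?v s * ?M s u) * ?V u = (?v u - d u) * ?V u"
      by simp
  qed
  finally have "(\<Sum>s\<in>UNIV. ?v s * (\<Sum>a\<in>UNIV. q s a * Af P r \<gamma> p s a))
      = (\<Sum>s\<in>UNIV. ?v s * exp_reward P r q s) - (\<Sum>u\<in>UNIV. d u * ?V u)"
    by (simp add: sum_policy_Af[OF assms(2)] distrib_left right_diff_distrib left_diff_distrib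
        sum.distrib sum_subtractf)
  then show ?thesis
    by (simp add: eta_eq_sum_visitation[OF assms(2,3)] eta_eq_sum_Vf[OF assms(1,3)])
qed

lemma visitation_diff_eq:
  assumes p: "is_policy p" and q: "is_policy q" and d: "\<And>s. 0 \<le> d s"
  shows "visitation P d \<gamma> p s' - visitation P d \<gamma> q s'
    = \<gamma> * ((\<Sum>s\<in>UNIV. (visitation P d \<gamma> p s - visitation P d \<gamma> q s) * state_kernel P p s s')
        + (\<Sum>s\<in>UNIV. visitation P d \<gamma> q s * (state_kernel P p s s' - state_kernel P q s s')))"
proof -
  let ?vp = "visitation P d \<gamma> p" and ?vq = "visitation P d \<gamma> q"
  let ?Mp = "state_kernel P p" and ?Mq = "state_kernel P q"
  have "(\<Sum>s\<in>UNIV. (?vp s - ?vq s) * ?Mp s s') + (\<Sum>s\<in>UNIV. ?vq s * (?Mp s s' - ?Mq s s'))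
      = (\<Sum>s\<in>UNIV. ?vp s * ?Mp s s') - (\<Sum>s\<in>UNIV. ?vq s * ?Mq s s')"
    by (simp add: left_diff_distrib right_diff_distrib sum_subtractf)
  moreover have "?vp s' = d s' + \<gamma> * (\<Sum>s\<in>UNIV. ?vp s * ?Mp s s')"
    by (rule visitation_rec[OF p d])
  moreover have "?vq s' = d s' + \<gamma> * (\<Sum>s\<in>UNIV. ?vq s * ?Mq s s')"
    by (rule visitation_rec[OF q d])
  ultimately show ?thesis
    by (simp only: right_diff_distrib)
qed

lemma visitation_l1_dist:
  assumes p: "is_policy p" and q: "is_policy q" and d: "\<And>s. 0 \<le> d s"
  shows "(1 - \<gamma>) * (\<Sum>s\<in>UNIV. \<bar>visitation P d \<gamma> p s - visitation P d \<gamma> q s\<bar>)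
     \<le> \<gamma> * (\<Sum>s\<in>UNIV. visitation P d \<gamma> q s * (\<Sum>a\<in>UNIV. \<bar>p s a - q s a\<bar>))"
proof -
  let ?vp = "visitation P d \<gamma> p" and ?vq = "visitation P d \<gamma> q"
  let ?Mp = "state_kernel P p" and ?Mq = "state_kernel P q"
  let ?L = "\<Sum>s\<in>UNIV. \<bar>?vp s - ?vq s\<bar>"
  let ?X = "\<lambda>s'. \<Sum>s\<in>UNIV. (?vp s - ?vq s) * ?Mp s s'"
  let ?Y = "\<lambda>s'. \<Sum>s\<in>UNIV. ?vq s * (?Mp s s' - ?Mq s s')"
  have "?L = (\<Sum>s'\<in>UNIV. \<gamma> * \<bar>?X s' + ?Y s'\<bar>)"
    by (rule sum.cong[OF refl])
      (subst visitation_diff_eq[OF p q d], simp add: abs_mult discount_nonneg)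
  also have "\<dots> \<le> \<gamma> * ((\<Sum>s'\<in>UNIV. \<bar>?X s'\<bar>) + (\<Sum>s'\<in>UNIV. \<bar>?Y s'\<bar>))"
    unfolding sum_distrib_left[symmetric] sum.distrib[of "\<lambda>s'. \<bar>?X s'\<bar>", symmetric]
    by (intro mult_left_mono discount_nonneg sum_mono abs_triangle_ineq)
  also have "\<dots> \<le> \<gamma> * ((\<Sum>s\<in>UNIV. \<bar>?vp s - ?vq s\<bar> * (\<Sum>s'\<in>UNIV. \<bar>?Mp s s'\<bar>))
      + (\<Sum>s\<in>UNIV. \<bar>?vq s\<bar> * (\<Sum>s'\<in>UNIV. \<bar>?Mp s s' - ?Mq s s'\<bar>)))"
    by (intro mult_left_mono discount_nonneg add_mono sum_abs_vector_matrix_le)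
  also have "\<dots> \<le> \<gamma> * (?L + (\<Sum>s\<in>UNIV. ?vq s * (\<Sum>a\<in>UNIV. \<bar>p s a - q s a\<bar>)))"
  proof -
    have "(\<Sum>s'\<in>UNIV. \<bar>?Mp s s'\<bar>) = 1" for s
      using sum_state_kernel[OF kernel p] state_kernel_nonneg[OF kernel p] by simp
    moreover have "\<bar>?vq s\<bar> * (\<Sum>s'\<in>UNIV. \<bar>?Mp s s' - ?Mq s s'\<bar>) \<le> ?vq s * (\<Sum>a\<in>UNIV. \<bar>p s a - q s a\<bar>)" for s
      using visitation_nonneg[OF q d] sum_abs_state_kernel_diff_le[OF kernel] by (simp add: mult_left_mono)
    ultimately show ?thesis
      by (simp add: discount_nonneg mult_left_mono sum_mono)
  qed
  finally show ?thesis
    by (simp add: algebra_simps)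
qed

lemma visitation_l1_dist_le:
  assumes "is_policy p" "is_policy q" "\<And>s. 0 \<le> d s"
    and "\<And>s. (\<Sum>a\<in>UNIV. \<bar>p s a - q s a\<bar>) \<le> c s"
  shows "(\<Sum>s\<in>UNIV. \<bar>visitation P d \<gamma> p s - visitation P d \<gamma> q s\<bar>)
     \<le> \<gamma> / (1 - \<gamma>) * (\<Sum>s\<in>UNIV. visitation P d \<gamma> q s * c s)"
proof -
  have "(1 - \<gamma>) * (\<Sum>s\<in>UNIV. \<bar>visitation P d \<gamma> p s - visitation P d \<gamma> q s\<bar>)
      \<le> \<gamma> * (\<Sum>s\<in>UNIV. visitation P d \<gamma> q s * c s)"
    using visitation_l1_dist[OF assms(1-3)] assms(4) visitation_nonneg[OF assms(2,3)]
    by (meson discount_nonneg mult_left_mono order_trans sum_mono)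
  then show ?thesis
    using discount_lt_1 by (simp add: field_simps)
qed

lemma sum_visitation_mult_const:
  assumes "is_policy p" "is_distribution d"
  shows "(\<Sum>s\<in>UNIV. visitation P d \<gamma> p s * c) = c / (1 - \<gamma>)"
  using sum_visitation[OF assms(1), of d] assms(2)
  by (simp add: is_distribution_def sum_distrib_right[symmetric])

lemma visitation_expectation_diff_le:
  assumes "is_policy p" "is_policy q" "\<And>s. 0 \<le> d s"
    and "\<And>s. (\<Sum>a\<in>UNIV. \<bar>p s a - q s a\<bar>) \<le> c s"
    and f: "\<And>s. 0 \<le> f s" "\<And>s. f s \<le> M"
  shows "\<bar>(\<Sum>s\<in>UNIV. visitation P d \<gamma> p s * f s) - (\<Sum>s\<in>UNIV. visitation P d \<gamma> q s * f s)\<bar>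
     \<le> M * (\<gamma> / (1 - \<gamma>) * (\<Sum>s\<in>UNIV. visitation P d \<gamma> q s * c s))"
proof -
  have "0 \<le> M"
    using f[of undefined] by linarith
  then show ?thesis
    using abs_sum_mult_diff_le[where f=f, OF f] visitation_l1_dist_le[where d=d and c=c, OF assms(1-4)]
    by (meson mult_left_mono order_trans)
qed

lemma performance_difference_ge:
  assumes "is_policy p0" "is_policy \<theta>" "\<And>s. 0 \<le> d s"
  shows "(\<Sum>s\<in>UNIV. visitation P d \<gamma> \<theta> s * (\<Sum>a\<in>UNIV. q s a * Af P r \<gamma> p0 s a))
       - (\<Sum>s\<in>UNIV. visitation P d \<gamma> \<theta> s * (\<Sum>a\<in>UNIV. \<bar>q s a - \<theta> s a\<bar> * \<bar>Af P r \<gamma> p0 s a\<bar>))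
     \<le> eta P r d \<gamma> \<theta> - eta P r d \<gamma> p0"
proof -
  let ?A = "Af P r \<gamma> p0"
  have "(\<Sum>a\<in>UNIV. q s a * ?A s a) - (\<Sum>a\<in>UNIV. \<bar>q s a - \<theta> s a\<bar> * \<bar>?A s a\<bar>)
      \<le> (\<Sum>a\<in>UNIV. \<theta> s a * ?A s a)" for s
  proof -
    have "(\<Sum>a\<in>UNIV. q s a * ?A s a) - (\<Sum>a\<in>UNIV. \<theta> s a * ?A s a) = (\<Sum>a\<in>UNIV. (q s a - \<theta> s a) * ?A s a)"
      by (simp add: left_diff_distrib sum_subtractf)
    also have "\<dots> \<le> (\<Sum>a\<in>UNIV. \<bar>q s a - \<theta> s a\<bar> * \<bar>?A s a\<bar>)"
      by (intro sum_mono) (metis abs_ge_self abs_mult)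
    finally show ?thesis by simp
  qed
  then have "(\<Sum>s\<in>UNIV. visitation P d \<gamma> \<theta> s * ((\<Sum>a\<in>UNIV. q s a * ?A s a)
        - (\<Sum>a\<in>UNIV. \<bar>q s a - \<theta> s a\<bar> * \<bar>?A s a\<bar>)))
      \<le> eta P r d \<gamma> \<theta> - eta P r d \<gamma> p0"
    unfolding performance_difference[OF assms]
    by (intro sum_mono mult_left_mono visitation_nonneg[OF assms(2,3)])
  then show ?thesis
    by (simp add: right_diff_distrib sum_subtractf)
qed

theorem eta_ge_perturbation_bound:
  fixes r :: "'s \<Rightarrow> 'a \<Rightarrow> 's \<Rightarrow> real" and p0 q \<theta> :: "'s \<Rightarrow> 'a \<Rightarrow> real"
  defines "A \<equiv> Af P r \<gamma> p0"
  assumes p0: "is_policy p0" and q: "is_policy q" and \<theta>: "is_policy \<theta>" and d: "is_distribution d"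
    and q_near_p0: "\<And>s. (\<Sum>a\<in>UNIV. \<bar>q s a - p0 s a\<bar>) \<le> \<epsilon>"
    and gain_nonneg: "\<And>s. 0 \<le> (\<Sum>a\<in>UNIV. q s a * A s a)"
    and gain_le: "\<And>s. (\<Sum>a\<in>UNIV. q s a * A s a) \<le> G"
    and tv_le: "\<And>s. (\<Sum>a\<in>UNIV. \<bar>q s a - \<theta> s a\<bar>) \<le> MT"
    and atv_le: "\<And>s. (\<Sum>a\<in>UNIV. \<bar>q s a - \<theta> s a\<bar> * \<bar>A s a\<bar>) \<le> MA"
  shows "eta P r d \<gamma> \<theta> \<ge> eta P r d \<gamma> p0
      + (\<Sum>s\<in>UNIV. visitation P d \<gamma> q s * (\<Sum>a\<in>UNIV. q s a * A s a))
      - (\<Sum>s\<in>UNIV. visitation P d \<gamma> p0 s * (\<Sum>a\<in>UNIV. \<bar>q s a - \<theta> s a\<bar> * \<bar>A s a\<bar>))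
      - \<gamma> * MA / (1 - \<gamma>) * (\<Sum>s\<in>UNIV. visitation P d \<gamma> p0 s * (\<Sum>a\<in>UNIV. \<bar>q s a - \<theta> s a\<bar>))
      - \<gamma> * \<epsilon> * MA / (1 - \<gamma>)^2
      - \<gamma> * G * MT / (1 - \<gamma>)^2"
proof -
  let ?gain = "\<lambda>s. \<Sum>a\<in>UNIV. q s a * A s a"
  let ?tv = "\<lambda>s. \<Sum>a\<in>UNIV. \<bar>q s a - \<theta> s a\<bar>"
  let ?atv = "\<lambda>s. \<Sum>a\<in>UNIV. \<bar>q s a - \<theta> s a\<bar> * \<bar>A s a\<bar>"
  let ?v0 = "visitation P d \<gamma> p0" and ?vq = "visitation P d \<gamma> q" and ?v\<theta> = "visitation P d \<gamma> \<theta>"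
  have d_nonneg: "\<And>s. 0 \<le> d s"
    using d by (simp add: is_distribution_def)
  have "(\<Sum>a\<in>UNIV. \<bar>\<theta> s a - q s a\<bar>) \<le> MT" for s
    using tv_le[of s] by (simp add: abs_minus_commute)
  from visitation_expectation_diff_le[where d=d and c="\<lambda>_. MT" and f="?gain",
      OF \<theta> q d_nonneg this gain_nonneg gain_le]
  have "\<bar>(\<Sum>s\<in>UNIV. ?v\<theta> s * ?gain s) - (\<Sum>s\<in>UNIV. ?vq s * ?gain s)\<bar>
      \<le> G * (\<gamma> / (1 - \<gamma>) * (MT / (1 - \<gamma>)))"
    by (simp only: sum_visitation_mult_const[OF q d])
  moreover have "G * (\<gamma> / (1 - \<gamma>) * (MT / (1 - \<gamma>))) = \<gamma> * G * MT / (1 - \<gamma>)^2"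
    by (simp add: power2_eq_square mult_ac)
  ultimately have gain_shift:
    "(\<Sum>s\<in>UNIV. ?vq s * ?gain s) - (\<Sum>s\<in>UNIV. ?v\<theta> s * ?gain s) \<le> \<gamma> * G * MT / (1 - \<gamma>)^2"
    by linarith
  have "(\<Sum>a\<in>UNIV. \<bar>\<theta> s a - p0 s a\<bar>) \<le> ?tv s + \<epsilon>" for s
  proof -
    have "(\<Sum>a\<in>UNIV. \<bar>\<theta> s a - p0 s a\<bar>) \<le> (\<Sum>a\<in>UNIV. \<bar>q s a - \<theta> s a\<bar> + \<bar>q s a - p0 s a\<bar>)"
      by (intro sum_mono) linarith
    then show ?thesis
      using q_near_p0[of s] by (simp add: sum.distrib)
  qed
  from visitation_expectation_diff_le[where d=d and c="\<lambda>s. ?tv s + \<epsilon>" and f="?atv",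
      OF \<theta> p0 d_nonneg this _ atv_le]
  have "\<bar>(\<Sum>s\<in>UNIV. ?v\<theta> s * ?atv s) - (\<Sum>s\<in>UNIV. ?v0 s * ?atv s)\<bar>
      \<le> MA * (\<gamma> / (1 - \<gamma>) * ((\<Sum>s\<in>UNIV. ?v0 s * ?tv s) + \<epsilon> / (1 - \<gamma>)))"
    by (simp add: sum_nonneg distrib_left sum.distrib sum_visitation_mult_const[OF p0 d])
  moreover have "MA * (\<gamma> / (1 - \<gamma>) * ((\<Sum>s\<in>UNIV. ?v0 s * ?tv s) + \<epsilon> / (1 - \<gamma>)))
      = \<gamma> * MA / (1 - \<gamma>) * (\<Sum>s\<in>UNIV. ?v0 s * ?tv s) + \<gamma> * \<epsilon> * MA / (1 - \<gamma>)^2"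
    by (simp add: distrib_left power2_eq_square mult_ac)
  ultimately have penalty_shift: "(\<Sum>s\<in>UNIV. ?v\<theta> s * ?atv s) - (\<Sum>s\<in>UNIV. ?v0 s * ?atv s)
      \<le> \<gamma> * MA / (1 - \<gamma>) * (\<Sum>s\<in>UNIV. ?v0 s * ?tv s) + \<gamma> * \<epsilon> * MA / (1 - \<gamma>)^2"
    by linarith
  show ?thesis
    using performance_difference_ge[where r=r and q=q and d=d, OF p0 \<theta> d_nonneg] gain_shift penalty_shift
    unfolding A_def by linarith
qed

end

section \<open>Perturbations of the reference policy\<close>

lemma is_policy_perturbation:
  assumes p0: "is_policy p0" and "\<bar>\<epsilon>\<bar> \<le> 1" "\<And>s a. \<bar>h s a\<bar> \<le> 1"
    and centred: "\<And>s. (\<Sum>a\<in>UNIV. p0 s a * h s a) = 0"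
  shows "is_policy (\<lambda>s a. (1 + \<epsilon> * h s a) * p0 s a)"
  unfolding is_policy_def
proof (intro conjI allI)
  fix s a
  have "\<bar>\<epsilon> * h s a\<bar> \<le> 1"
    using assms(2) assms(3)[of s a] by (simp add: abs_mult mult_le_one)
  then have "0 \<le> 1 + \<epsilon> * h s a"
    by (simp add: abs_le_iff)
  with p0 show "0 \<le> (1 + \<epsilon> * h s a) * p0 s a"
    unfolding is_policy_def by simp
next
  fix s
  have "(\<Sum>a\<in>UNIV. (1 + \<epsilon> * h s a) * p0 s a) = (\<Sum>a\<in>UNIV. p0 s a) + \<epsilon> * (\<Sum>a\<in>UNIV. p0 s a * h s a)"
    by (simp add: algebra_simps sum.distrib sum_distrib_left)
  then show "(\<Sum>a\<in>UNIV. (1 + \<epsilon> * h s a) * p0 s a) = 1"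
    using p0 centred unfolding is_policy_def by simp
qed

lemma sum_abs_perturbation_diff_le:
  assumes p0: "is_policy p0" and h: "\<And>s a. \<bar>h s a\<bar> \<le> 1"
  shows "(\<Sum>a\<in>UNIV. \<bar>(1 + \<epsilon> * h s a) * p0 s a - p0 s a\<bar>) \<le> \<bar>\<epsilon>\<bar>"
proof -
  have p0_nonneg: "0 \<le> p0 s a" for a
    using p0 unfolding is_policy_def by simp
  have "\<bar>(1 + \<epsilon> * h s a) * p0 s a - p0 s a\<bar> \<le> \<bar>\<epsilon>\<bar> * p0 s a" for a
  proof -
    have "\<bar>(1 + \<epsilon> * h s a) * p0 s a - p0 s a\<bar> = \<bar>\<epsilon>\<bar> * \<bar>h s a\<bar> * p0 s a"
      using p0_nonneg[of a] by (simp add: algebra_simps abs_mult)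
    also have "\<dots> \<le> \<bar>\<epsilon>\<bar> * p0 s a"
      using h[of s a] p0_nonneg[of a] by (intro mult_right_mono mult_left_le) simp_all
    finally show ?thesis .
  qed
  then have "(\<Sum>a\<in>UNIV. \<bar>(1 + \<epsilon> * h s a) * p0 s a - p0 s a\<bar>) \<le> \<bar>\<epsilon>\<bar> * (\<Sum>a\<in>UNIV. p0 s a)"
    by (simp add: sum_distrib_left sum_mono)
  then show ?thesis
    using p0 unfolding is_policy_def by simp
qed

lemma (in discounted_mdp) sum_perturbation_Af:
  assumes "is_policy p0" "\<And>s. (\<Sum>a\<in>UNIV. p0 s a * h s a) = 0"
  shows "(\<Sum>a\<in>UNIV. (1 + \<epsilon> * h s a) * p0 s a * Af P r \<gamma> p0 s a)
     = \<epsilon> * (\<Sum>a\<in>UNIV. p0 s a * (h s a * Atilde P r \<gamma> p0 c s a))"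
proof -
  have "(\<Sum>a\<in>UNIV. (1 + \<epsilon> * h s a) * p0 s a * Af P r \<gamma> p0 s a)
      = (\<Sum>a\<in>UNIV. p0 s a * Af P r \<gamma> p0 s a) + \<epsilon> * (\<Sum>a\<in>UNIV. p0 s a * (h s a * Af P r \<gamma> p0 s a))"
    by (simp add: algebra_simps sum.distrib sum_distrib_left)
  moreover have "(\<Sum>a\<in>UNIV. p0 s a * (h s a * Atilde P r \<gamma> p0 c s a))
      = (\<Sum>a\<in>UNIV. p0 s a * (h s a * Af P r \<gamma> p0 s a)) + (Vf P r \<gamma> p0 s - c s) * (\<Sum>a\<in>UNIV. p0 s a * h s a)"
  proof -
    have "p0 s a * (h s a * Atilde P r \<gamma> p0 c s a)
        = p0 s a * (h s a * Af P r \<gamma> p0 s a) + (Vf P r \<gamma> p0 s - c s) * (p0 s a * h s a)" for a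
      by (simp add: Atilde_def Af_def algebra_simps)
    then show ?thesis
      by (simp add: sum.distrib sum_distrib_left)
  qed
  ultimately show ?thesis
    using assms by (simp add: sum_policy_Af_self)
qed

lemma pi_star_eq_perturbation:
  "pi_star P r \<gamma> \<epsilon> lam pi0 \<mu>
     = (\<lambda>s a. (1 + \<epsilon> * tanh (Atilde P r \<gamma> pi0 \<mu> s a / (2 * lam))) * pi0 s a)"
  by (simp add: pi_star_def fun_eq_iff)

lemma is_policy_pi_star:
  assumes "is_policy pi0" "\<bar>\<epsilon>\<bar> \<le> 1"
    and "\<And>s. (\<Sum>a\<in>UNIV. pi0 s a * tanh (Atilde P r \<gamma> pi0 \<mu> s a / (2 * lam))) = 0"
  shows "is_policy (pi_star P r \<gamma> \<epsilon> lam pi0 \<mu>)"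
  unfolding pi_star_eq_perturbation by (rule is_policy_perturbation[OF assms(1,2) abs_tanh_le_1 assms(3)])

lemma sum_abs_pi_star_diff_le:
  assumes "is_policy pi0"
  shows "(\<Sum>a\<in>UNIV. \<bar>pi_star P r \<gamma> \<epsilon> lam pi0 \<mu> s a - pi0 s a\<bar>) \<le> \<bar>\<epsilon>\<bar>"
  unfolding pi_star_eq_perturbation by (rule sum_abs_perturbation_diff_le[OF assms abs_tanh_le_1])

lemma (in discounted_mdp) sum_pi_star_Af:
  assumes "is_policy pi0"
    and "\<And>s. (\<Sum>a\<in>UNIV. pi0 s a * tanh (Atilde P r \<gamma> pi0 \<mu> s a / (2 * lam))) = 0"
  shows "(\<Sum>a\<in>UNIV. pi_star P r \<gamma> \<epsilon> lam pi0 \<mu> s a * Af P r \<gamma> pi0 s a)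
     = \<epsilon> * (\<Sum>a\<in>UNIV. pi0 s a * (tanh (Atilde P r \<gamma> pi0 \<mu> s a / (2 * lam)) * Atilde P r \<gamma> pi0 \<mu> s a))"
  unfolding pi_star_eq_perturbation by (rule sum_perturbation_Af[OF assms])

theorem corollary2:
  fixes P :: "'s::finite \<Rightarrow> 'a::finite \<Rightarrow> 's \<Rightarrow> real"
    and r :: "'s \<Rightarrow> 'a \<Rightarrow> 's \<Rightarrow> real"
    and d0 :: "'s \<Rightarrow> real"
    and \<gamma> \<epsilon> lam :: real
    and pi0 pi_theta :: "'s \<Rightarrow> 'a \<Rightarrow> real"
    and \<mu> :: "'s \<Rightarrow> real"
  assumes kernel: "is_kernel P"
    and init: "is_distribution d0"
    and gamma: "0 < \<gamma>" "\<gamma> < 1"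
    and eps: "0 < \<epsilon>" "\<epsilon> < 1"
    and lam: "0 < lam"
    and pol0: "is_policy pi0"
    and pos0: "\<And>s a. 0 < pi0 s a"
    and polth: "is_policy pi_theta"
    and mu: "\<And>s. (\<Sum>a\<in>UNIV. pi0 s a * tanh (Atilde P r \<gamma> pi0 \<mu> s a / (2 * lam))) = 0"
  defines "DTV \<equiv> (\<lambda>s. \<Sum>a\<in>UNIV. pi0 s a *
                 \<bar>pi_star P r \<gamma> \<epsilon> lam pi0 \<mu> s a / pi0 s a - pi_theta s a / pi0 s a\<bar>)"
    and "DATV \<equiv> (\<lambda>s. \<Sum>a\<in>UNIV. pi0 s a *
                 (\<bar>pi_star P r \<gamma> \<epsilon> lam pi0 \<mu> s a / pi0 s a - pi_theta s a / pi0 s a\<bar>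
                  * \<bar>Af P r \<gamma> pi0 s a\<bar>))"
    and "B \<equiv> (\<Sum>s\<in>UNIV. visitation P d0 \<gamma> (pi_star P r \<gamma> \<epsilon> lam pi0 \<mu>) s *
               (\<Sum>a\<in>UNIV. pi0 s a * (tanh (Atilde P r \<gamma> pi0 \<mu> s a / (2 * lam))
                                        * Atilde P r \<gamma> pi0 \<mu> s a)))"
    and "\<delta> \<equiv> Max (range (\<lambda>s. \<Sum>a\<in>UNIV. pi0 s a * (tanh (Atilde P r \<gamma> pi0 \<mu> s a / (2 * lam))
                                        * Atilde P r \<gamma> pi0 \<mu> s a)))"
  shows "eta P r d0 \<gamma> pi_theta \<ge> eta P r d0 \<gamma> pi0 + \<epsilon> * B
           - (\<Sum>s\<in>UNIV. visitation P d0 \<gamma> pi0 s * DATV s)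
           - \<gamma> * Max (range DATV) / (1 - \<gamma>) * (\<Sum>s\<in>UNIV. visitation P d0 \<gamma> pi0 s * DTV s)
           - \<gamma> * \<epsilon> * Max (range DATV) / (1 - \<gamma>)^2
           - \<gamma> * \<epsilon> * \<delta> * Max (range DTV) / (1 - \<gamma>)^2"
proof -
  have "discounted_mdp P \<gamma>"
    using kernel gamma by (simp add: discounted_mdp_def)
  then interpret discounted_mdp P \<gamma> .
  define ps where "ps = pi_star P r \<gamma> \<epsilon> lam pi0 \<mu>"
  define g where "g s = (\<Sum>a\<in>UNIV. pi0 s a *
      (tanh (Atilde P r \<gamma> pi0 \<mu> s a / (2 * lam)) * Atilde P r \<gamma> pi0 \<mu> s a))" for s
  have gain: "(\<Sum>a\<in>UNIV. ps s a * Af P r \<gamma> pi0 s a) = \<epsilon> * g s" for s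
    unfolding ps_def g_def using pol0 mu by (rule sum_pi_star_Af)
  have "0 \<le> g s" for s
    unfolding g_def using pos0 lam
    by (intro sum_nonneg mult_nonneg_nonneg less_imp_le tanh_divide_mult_self_nonneg) simp_all
  moreover have "g s \<le> \<delta>" for s
    unfolding assms(15) g_def by (rule Max_ge) auto
  ultimately have gain_bounds: "0 \<le> (\<Sum>a\<in>UNIV. ps s a * Af P r \<gamma> pi0 s a)"
    "(\<Sum>a\<in>UNIV. ps s a * Af P r \<gamma> pi0 s a) \<le> \<epsilon> * \<delta>" for s
    using eps unfolding gain by simp_all
  have near: "(\<Sum>a\<in>UNIV. \<bar>ps s a - pi0 s a\<bar>) \<le> \<epsilon>" for s
    using sum_abs_pi_star_diff_le[OF pol0] eps unfolding ps_def by (metis abs_of_pos)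
  have ps_policy: "is_policy ps"
    unfolding ps_def using eps by (intro is_policy_pi_star[OF pol0 _ mu]) simp
  have DTV_eq: "DTV = (\<lambda>s. \<Sum>a\<in>UNIV. \<bar>ps s a - pi_theta s a\<bar>)"
    unfolding assms(12) ps_def using pos0 by (simp add: mult_abs_diff_divide_self)
  have DATV_eq: "DATV = (\<lambda>s. \<Sum>a\<in>UNIV. \<bar>ps s a - pi_theta s a\<bar> * \<bar>Af P r \<gamma> pi0 s a\<bar>)"
    unfolding assms(13) ps_def using pos0 by (simp add: mult.assoc[symmetric] mult_abs_diff_divide_self)
  have "DTV s \<le> Max (range DTV)" "DATV s \<le> Max (range DATV)" for s
    by (rule Max_ge; simp)+
  note bound = eta_ge_perturbation_bound[OF pol0 ps_policy polth init near gain_bounds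
      this[unfolded DTV_eq DATV_eq]]
  have "\<epsilon> * B = (\<Sum>s\<in>UNIV. visitation P d0 \<gamma> ps s * (\<Sum>a\<in>UNIV. ps s a * Af P r \<gamma> pi0 s a))"
    unfolding gain by (simp add: assms(14) g_def ps_def sum_distrib_left mult_ac)
  with bound show ?thesis
    unfolding DTV_eq DATV_eq by (simp add: mult.assoc)
qed

end
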